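(* For any integers $n, d \geq 2$ with $\gcd(d,n) = 1$, we have $\max S_{d,n} = nd - n - d$.
   Context: For integers $d,n \geq 2$ with $\gcd(n,d)=1$, let $n^\ast \in \{1,\dots,d-1\}$ be the unique integer with $n^\ast \equiv -n \pmod d$, and define $S_{d,n} = \{ n^\ast + jd : j \in \mathbb{Z}_{\geq 0},\ n^\ast + jd < n(d-1)\}$. *)

theory Defs
  imports Main
begin

definition nstar :: "int \<Rightarrow> int \<Rightarrow> int" where
  "nstar d n = (THE m. m \<in> {1..d-1} \<and> m mod d = (- n) mod d)"

definition S_set :: "int \<Rightarrow> int \<Rightarrow> int set" where
  "S_set d n = {nstar d n + int j * d | j :: nat. nstar d n + int j * d < n * (d - 1)}"

end

theory Submission
  imports Defs
begin

text \<open>The set \<open>S_set d n\<close> consists exactly of the positive integers below \<open>n(d - 1)\<close> that are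
  congruent to \<open>-n\<close> modulo \<open>d\<close>, because \<open>n\<^sup>*\<close> is the least positive such integer. Since
  \<open>n(d - 1)\<close> is itself congruent to \<open>-n\<close>, the largest element is \<open>n(d - 1) - d = nd - n - d\<close>;
  coprimality excludes \<open>n = d = 2\<close>, the only case in which this number is not positive.\<close>

lemma not_dvd_if_gcd_eq_1:
  fixes d n :: int
  assumes "gcd d n = 1" and "2 \<le> d"
  shows "\<not> d dvd n"
  using assms by (auto simp: gcd_proj1_iff)

lemma neg_mod_bounds:
  fixes d n :: int
  assumes "1 < d" and "\<not> d dvd n"
  shows "1 \<le> (- n) mod d" and "(- n) mod d \<le> d - 1"
proof -
  have "(- n) mod d \<noteq> 0" using assms(2) by (simp add: mod_eq_0_iff_dvd)
  moreover have "0 \<le> (- n) mod d" and "(- n) mod d < d" using assms(1) by auto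
  ultimately show "1 \<le> (- n) mod d" and "(- n) mod d \<le> d - 1" by auto
qed

lemma nstar_eq_neg_mod:
  fixes d n :: int
  assumes "1 < d" and "\<not> d dvd n"
  shows "nstar d n = (- n) mod d"
  unfolding nstar_def
proof (rule the_equality)
  show "(- n) mod d \<in> {1..d - 1} \<and> (- n) mod d mod d = (- n) mod d"
    using neg_mod_bounds[OF assms] by simp
next
  fix m assume m: "m \<in> {1..d - 1} \<and> m mod d = (- n) mod d"
  then have "m = m mod d" by (intro mod_pos_pos_trivial[symmetric]) auto
  with m show "m = (- n) mod d" by argo
qed

lemma mem_S_set_iff:
  fixes d n x :: int
  assumes "1 < d" and "\<not> d dvd n"
  shows "x \<in> S_set d n \<longleftrightarrow> 0 < x \<and> x < n * (d - 1) \<and> x mod d = (- n) mod d"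
proof -
  define s where "s = (- n) mod d"
  have s_bounds: "1 \<le> s" "s < d" using neg_mod_bounds[OF assms] by (simp_all add: s_def)
  have in_progression: "(\<exists>j :: nat. x = s + int j * d) \<longleftrightarrow> 0 < x \<and> x mod d = s"
  proof
    assume "\<exists>j :: nat. x = s + int j * d"
    then obtain j :: nat where x: "x = s + int j * d" by blast
    have "0 < x" using x s_bounds assms(1) by (simp add: add_pos_nonneg)
    moreover have "x mod d = s" using x s_bounds by simp
    ultimately show "0 < x \<and> x mod d = s" ..
  next
    assume x: "0 < x \<and> x mod d = s"
    then have "0 \<le> x div d" using assms(1) by (simp add: pos_imp_zdiv_nonneg_iff)
    then have "x = s + int (nat (x div d)) * d" using x div_mult_mod_eq[of x d] by simp
    then show "\<exists>j :: nat. x = s + int j * d" ..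
  qed
  have "x \<in> S_set d n \<longleftrightarrow> (\<exists>j :: nat. x = s + int j * d) \<and> x < n * (d - 1)"
    unfolding S_set_def nstar_eq_neg_mod[OF assms] s_def[symmetric] by auto
  with in_progression show ?thesis unfolding s_def[symmetric] by argo
qed

lemma le_diff_if_mod_eq_less:
  fixes d x a :: int
  assumes "0 < d" and "x mod d = a mod d" and "x < a"
  shows "x \<le> a - d"
proof -
  have "d dvd a - x" using assms(2)[symmetric] by (simp add: mod_eq_dvd_iff)
  then have "d \<le> a - x" using assms(3) by (simp add: zdvd_imp_le)
  then show ?thesis by simp
qed

lemma pred_mult_pred_ge_2:
  fixes n d :: int
  assumes "2 \<le> n" and "2 \<le> d" and "gcd d n = 1"
  shows "2 \<le> (n - 1) * (d - 1)"
proof (cases "n = 2")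
  case True
  with assms(3) have "d \<noteq> 2" by auto
  with assms(2) have "3 \<le> d" by simp
  with True show ?thesis by simp
next
  case False
  with assms(1,2) show ?thesis using mult_mono[of 2 "n - 1" 1 "d - 1"] by simp
qed

theorem lemma3p3:
  fixes n d :: int
  assumes "n \<ge> 2" and "d \<ge> 2" and "gcd d n = 1"
  shows "Max (S_set d n) = n * d - n - d"
proof -
  have d_gt_1: "1 < d" using assms(2) by simp
  have not_dvd: "\<not> d dvd n" using not_dvd_if_gcd_eq_1 assms(3,2) .
  note mem_S = mem_S_set_iff[OF d_gt_1 not_dvd]
  define N where "N = n * (d - 1)"
  have max_eq: "n * d - n - d = N - d" by (simp add: N_def algebra_simps)
  have "N = - n + n * d" by (simp add: N_def algebra_simps)
  then have N_mod: "N mod d = (- n) mod d" by (simp only: mod_mult_self1)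
  have "d < N" using pred_mult_pred_ge_2[OF assms] by (simp add: N_def algebra_simps)
  then have "n * d - n - d \<in> S_set d n"
    unfolding mem_S max_eq N_def[symmetric] using d_gt_1 N_mod by simp
  moreover have "x \<le> n * d - n - d" if "x \<in> S_set d n" for x
    using that le_diff_if_mod_eq_less[of d x N] N_mod d_gt_1
    unfolding mem_S max_eq N_def[symmetric] by simp
  moreover have "finite (S_set d n)"
    by (rule finite_subset[of _ "{0<..<N}"]) (auto simp: mem_S N_def)
  ultimately show ?thesis by (intro Max_eqI) auto
qed

end
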